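(* Let $n\geq 3$ and $k\geq 2$ be integers and let $LCG(n,k)$ be the layer cycle graph with parameters $n,k$. Then the minimum cardinality of a strong resolving set of $LCG(n,k)$ is $sdim(LCG(n,k))=\lceil \tfrac{n}{2}\rceil\, n(n-1)^{k-2}-1$.
   Context: All graphs are simple and connected; $d(u,v)$ is the shortest-path distance. For vertices $u,v$, $I_G[u,v]$ is the set of vertices lying on some shortest $u$–$v$ path. A vertex $w$ strongly resolves $u$ and $v$ if $v\in I_G[u,w]$ or $u\in I_G[v,w]$. A set $R$ of vertices is a strong resolving set of $G$ if every two distinct vertices of $G$ are strongly resolved by some vertex of $R$; $sdim(G)$ is the minimum size of a strong resolving set. The layer cycle graph $LCG(n,k)$ ($n\geq 3$, $k\geq 2$) is constructed as follows. Its vertex set is partitioned into layers $U_1,\dots,U_k$. Layer $U_1$ is a cycle $C_n$ on vertices $1,\dots,n$. For $2\leq p\leq k$, layer $U_p$ consists of $n(n-1)^{p-2}$ vertex-disjoint cycles of length $n$, each with a distinguished vertex called its head vertex. Each vertex of $U_1$ is joined by an edge to the head vertex of exactly one cycle of $U_2$ (distinct vertices to distinct cycles). For $2\leq p<k$, each of the $n-1$ non-head vertices of each cycle of $U_p$ is joined by an edge to the head vertex of exactly one cycle of $U_{p+1}$, in such a way that every cycle of $U_{p+1}$ has its head joined to exactly one such vertex. There are no other edges. Thus $LCG(n,k)$ has $n+\sum_{p=2}^{k}n^2(n-1)^{p-2}$ vertices. *)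

theory Defs
  imports Main
begin

definition is_walk :: "('a \<Rightarrow> 'a \<Rightarrow> bool) \<Rightarrow> 'a list \<Rightarrow> bool" where
  "is_walk E p \<longleftrightarrow> p \<noteq> [] \<and> (\<forall>i. Suc i < length p \<longrightarrow> E (p ! i) (p ! Suc i))"

definition gdist :: "('a \<Rightarrow> 'a \<Rightarrow> bool) \<Rightarrow> 'a \<Rightarrow> 'a \<Rightarrow> nat" where
  "gdist E u v = (LEAST m. \<exists>p. is_walk E p \<and> hd p = u \<and> last p = v \<and> length p = Suc m)"

definition interval :: "'a set \<Rightarrow> ('a \<Rightarrow> 'a \<Rightarrow> bool) \<Rightarrow> 'a \<Rightarrow> 'a \<Rightarrow> 'a set" where
  "interval V E u v = {w \<in> V. gdist E u w + gdist E w v = gdist E u v}"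

definition strongly_resolves :: "'a set \<Rightarrow> ('a \<Rightarrow> 'a \<Rightarrow> bool) \<Rightarrow> 'a \<Rightarrow> 'a \<Rightarrow> 'a \<Rightarrow> bool" where
  "strongly_resolves V E w u v \<longleftrightarrow> v \<in> interval V E u w \<or> u \<in> interval V E v w"

definition strong_resolving_set :: "'a set \<Rightarrow> ('a \<Rightarrow> 'a \<Rightarrow> bool) \<Rightarrow> 'a set \<Rightarrow> bool" where
  "strong_resolving_set V E R \<longleftrightarrow> R \<subseteq> V \<and>
     (\<forall>u\<in>V. \<forall>v\<in>V. u \<noteq> v \<longrightarrow> (\<exists>w\<in>R. strongly_resolves V E w u v))"

definition sdim :: "'a set \<Rightarrow> ('a \<Rightarrow> 'a \<Rightarrow> bool) \<Rightarrow> nat" where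
  "sdim V E = Min {card R | R. strong_resolving_set V E R}"

text \<open>A vertex is a nonempty list of length p (its layer, 1 \<le> p \<le> k).
  Layer 1: [i] with i < n, the vertices of the cycle U_1 (numbered 0..n-1).
  A cycle of layer p \<ge> 2 is named by its attachment vertex xs (a vertex of layer p-1,
  which is any vertex of U_1 if p = 2, and a non-head vertex otherwise);
  its vertices are xs @ [j], j < n, with head xs @ [0].
  Hence entries strictly between the first and the last lie in {1..n-1}.\<close>
definition lcg_vert :: "nat \<Rightarrow> nat \<Rightarrow> nat list \<Rightarrow> bool" where
  "lcg_vert n k xs \<longleftrightarrow> 1 \<le> length xs \<and> length xs \<le> k \<and> hd xs < n \<and> last xs < n \<and>
     (\<forall>i. 0 < i \<and> i < length xs - 1 \<longrightarrow> 1 \<le> xs ! i \<and> xs ! i < n)"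

definition lcg_V :: "nat \<Rightarrow> nat \<Rightarrow> nat list set" where
  "lcg_V n k = {xs. lcg_vert n k xs}"

definition lcg_adj :: "nat \<Rightarrow> nat \<Rightarrow> nat list \<Rightarrow> nat list \<Rightarrow> bool" where
  "lcg_adj n k xs ys \<longleftrightarrow> lcg_vert n k xs \<and> lcg_vert n k ys \<and>
     ((length xs = length ys \<and> butlast xs = butlast ys \<and>
        (last ys = (last xs + 1) mod n \<or> last xs = (last ys + 1) mod n))
      \<or> (ys = xs @ [0] \<and> (length xs = 1 \<or> last xs \<noteq> 0))
      \<or> (xs = ys @ [0] \<and> (length ys = 1 \<or> last ys \<noteq> 0)))"

end

(*
  A strong resolving set must contain one vertex of every pair of mutually maximally distant
  vertices (each of u, v has no neighbour farther from the other), and every pair of vertices is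
  strongly resolved by both members of some mutually maximally distant pair; so in a finite graph
  the strong resolving sets are exactly the sets meeting all such pairs.

  In LCG(n,k) the distance has a closed form on the list encoding of the vertices. From it, mutually
  maximally distant vertices are leaves (non-head vertices of the last layer), and two leaves form
  such a pair iff they are antipodal on a common cycle, or lie on different cycles and are both
  antipodal to the heads of their cycles. Meeting the antipodal pairs of one leaf cycle costs
  ceil(n/2) - 1 of its leaves, and ceil(n/2) unless one of the two leaves opposite to the head is
  missing, which can happen on at most one of the n(n-1)^(k-2) leaf cycles.
*)

theory Submission
  imports Defs
begin

lemma card_le_card_if_hits_pairs:
  assumes "finite R" "inj_on f A" "inj_on g A"
    and "\<And>x y. x \<in> A \<Longrightarrow> y \<in> A \<Longrightarrow> f x = g y \<Longrightarrow> x = y"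
    and "\<And>x. x \<in> A \<Longrightarrow> f x \<in> R \<or> g x \<in> R"
  shows "card A \<le> card R"
proof -
  define h where "h x = (if f x \<in> R then f x else g x)" for x
  have "inj_on h A"
  proof (rule inj_onI)
    fix x y assume "x \<in> A" "y \<in> A" "h x = h y"
    then show "x = y"
      using assms(2,3) assms(4)[of x y] assms(4)[of y x]
        unfolding h_def inj_on_def by (auto split: if_splits)
  qed
  moreover have "h ` A \<subseteq> R" using assms(5) unfolding h_def by auto
  ultimately show ?thesis using card_inj_on_le assms(1) by blast
qed

section \<open>Distance on a cycle\<close>

definition cyc_fwd :: "nat \<Rightarrow> nat \<Rightarrow> nat \<Rightarrow> nat" where
  "cyc_fwd n a b = (if a \<le> b then b - a else n + b - a)"

definition cyc_dist :: "nat \<Rightarrow> nat \<Rightarrow> nat \<Rightarrow> nat" where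
  "cyc_dist n a b = min (cyc_fwd n a b) (cyc_fwd n b a)"

definition cyc_succ :: "nat \<Rightarrow> nat \<Rightarrow> nat" where
  "cyc_succ n a = (if a + 1 = n then 0 else a + 1)"

definition cyc_pred :: "nat \<Rightarrow> nat \<Rightarrow> nat" where
  "cyc_pred n a = (if a = 0 then n - 1 else a - 1)"

lemma cyc_fwd_self [simp]: "cyc_fwd n a a = 0"
  unfolding cyc_fwd_def by simp

lemma cyc_fwd_add_fwd: "a < n \<Longrightarrow> b < n \<Longrightarrow> a \<noteq> b \<Longrightarrow> cyc_fwd n a b + cyc_fwd n b a = n"
  unfolding cyc_fwd_def by auto

lemma cyc_fwd_succ:
  "a < n \<Longrightarrow> b < n \<Longrightarrow> a \<noteq> b \<Longrightarrow> cyc_fwd n (cyc_succ n a) b + 1 = cyc_fwd n a b"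
  unfolding cyc_fwd_def cyc_succ_def by auto

lemma cyc_fwd_pred:
  "a < n \<Longrightarrow> b < n \<Longrightarrow> a \<noteq> b \<Longrightarrow> cyc_fwd n b (cyc_pred n a) + 1 = cyc_fwd n b a"
  unfolding cyc_fwd_def cyc_pred_def by auto

lemma cyc_fwd_trans:
  "a < n \<Longrightarrow> b < n \<Longrightarrow> c < n \<Longrightarrow>
    cyc_fwd n a b + cyc_fwd n b c = cyc_fwd n a c \<or>
    cyc_fwd n a b + cyc_fwd n b c = cyc_fwd n a c + n"
  unfolding cyc_fwd_def by auto

lemma cyc_succ_less: "a < n \<Longrightarrow> cyc_succ n a < n"
  unfolding cyc_succ_def by auto

lemma cyc_pred_less: "a < n \<Longrightarrow> cyc_pred n a < n"
  unfolding cyc_pred_def by auto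

lemma cyc_succ_pred: "a < n \<Longrightarrow> cyc_succ n (cyc_pred n a) = a"
  unfolding cyc_succ_def cyc_pred_def by auto

lemma cyc_pred_succ: "a < n \<Longrightarrow> cyc_pred n (cyc_succ n a) = a"
  unfolding cyc_succ_def cyc_pred_def by auto

lemma Suc_mod_eq_cyc_succ: "a < n \<Longrightarrow> Suc a mod n = cyc_succ n a"
  unfolding cyc_succ_def by auto

lemma cyc_dist_sym: "cyc_dist n a b = cyc_dist n b a"
  unfolding cyc_dist_def by simp

lemma cyc_dist_self [simp]: "cyc_dist n a a = 0"
  unfolding cyc_dist_def by simp

lemma cyc_dist_triangle:
  assumes "a < n" "b < n" "c < n"
  shows "cyc_dist n a c \<le> cyc_dist n a b + cyc_dist n b c"
  using cyc_fwd_trans[OF assms] cyc_fwd_trans[of c n b a] assms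
    cyc_fwd_add_fwd[of a n b] cyc_fwd_add_fwd[of b n c] cyc_fwd_add_fwd[of a n c]
  unfolding cyc_dist_def min_def by (cases "a = b"; cases "b = c"; cases "a = c"; auto)

lemma cyc_dist_le_half: "a < n \<Longrightarrow> b < n \<Longrightarrow> 2 * cyc_dist n a b \<le> n"
  using cyc_fwd_add_fwd[of a n b] unfolding cyc_dist_def by (cases "a = b") auto

lemma cyc_dist_succ:
  assumes "3 \<le> n" "a < n"
  shows "cyc_dist n a (cyc_succ n a) = 1"
proof -
  have "a \<noteq> cyc_succ n a" using assms unfolding cyc_succ_def by auto
  then show ?thesis
    using cyc_fwd_succ[of a n "cyc_succ n a"] cyc_fwd_add_fwd[of a n "cyc_succ n a"]
      cyc_succ_less assms
    unfolding cyc_dist_def by auto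
qed

lemma cyc_dist_step_toward:
  assumes "a < n" "b < n" "a \<noteq> b"
  shows "cyc_dist n (cyc_succ n a) b + 1 = cyc_dist n a b \<or>
    cyc_dist n (cyc_pred n a) b + 1 = cyc_dist n a b"
proof (cases "cyc_fwd n a b \<le> cyc_fwd n b a")
  case True
  have "cyc_dist n (cyc_succ n a) b + 1 = cyc_dist n a b"
  proof (cases "cyc_succ n a = b")
    case False
    then show ?thesis
      using True cyc_fwd_succ[OF assms] cyc_fwd_add_fwd[OF assms]
        cyc_fwd_add_fwd[OF cyc_succ_less[OF assms(1)] assms(2)]
      unfolding cyc_dist_def by auto
  qed (use True cyc_fwd_succ[OF assms] in \<open>auto simp: cyc_dist_def\<close>)
  then show ?thesis ..
next
  case backward: False
  have "cyc_dist n (cyc_pred n a) b + 1 = cyc_dist n a b"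
  proof (cases "cyc_pred n a = b")
    case False
    then show ?thesis
      using backward cyc_fwd_pred[OF assms] cyc_fwd_add_fwd[OF assms]
        cyc_fwd_add_fwd[OF cyc_pred_less[OF assms(1)] assms(2)]
      unfolding cyc_dist_def by auto
  qed (use backward cyc_fwd_pred[OF assms] in \<open>auto simp: cyc_dist_def\<close>)
  then show ?thesis ..
qed

lemma cyc_dist_step_away:
  assumes "3 \<le> n" "a < n" "b < n" "2 * cyc_dist n a b + 1 < n"
  shows "cyc_dist n a (cyc_succ n b) = cyc_dist n a b + 1 \<or>
    cyc_dist n a (cyc_pred n b) = cyc_dist n a b + 1"
proof (cases "a = b")
  case True
  then show ?thesis using cyc_dist_succ[OF assms(1,2)] by simp
next
  case False
  show ?thesis
  proof (cases "cyc_fwd n a b \<le> cyc_fwd n b a")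
    case True
    let ?c = "cyc_succ n b"
    have "?c \<noteq> a" using True False assms unfolding cyc_fwd_def cyc_succ_def by auto
    then have "cyc_fwd n a ?c = cyc_fwd n a b + 1"
      using cyc_fwd_pred[OF cyc_succ_less[OF assms(3)] assms(2)] cyc_pred_succ[OF assms(3)] by simp
    then have "cyc_dist n a ?c = cyc_dist n a b + 1"
      using True assms(4) cyc_fwd_add_fwd[OF assms(2,3) False] \<open>?c \<noteq> a\<close>
        cyc_fwd_add_fwd[OF assms(2) cyc_succ_less[OF assms(3)]]
      unfolding cyc_dist_def by auto
    then show ?thesis ..
  next
    case backward: False
    let ?c = "cyc_pred n b"
    have "?c \<noteq> a"
      using backward False assms unfolding cyc_fwd_def cyc_pred_def by (auto split: if_splits)
    then have "cyc_fwd n ?c a = cyc_fwd n b a + 1"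
      using cyc_fwd_succ[OF cyc_pred_less[OF assms(3)] assms(2)] cyc_succ_pred[OF assms(3)] by simp
    then have "cyc_dist n a ?c = cyc_dist n a b + 1"
      using backward assms(4) cyc_fwd_add_fwd[OF assms(2,3) False] \<open>?c \<noteq> a\<close>
        cyc_fwd_add_fwd[OF assms(2) cyc_pred_less[OF assms(3)]]
      unfolding cyc_dist_def by auto
    then show ?thesis ..
  qed
qed

lemma cyc_dist_shift: "a + d < n \<Longrightarrow> cyc_dist n a (a + d) = min d (n - d)"
  unfolding cyc_dist_def cyc_fwd_def by auto

section \<open>Graph distance and mutually maximally distant vertices\<close>

lemma is_walk_Cons_Cons: "is_walk E (x # y # ys) \<longleftrightarrow> E x y \<and> is_walk E (y # ys)"
  unfolding is_walk_def by (auto simp: All_less_Suc2 less_Suc_eq_0_disj)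

lemma sdim_eqI:
  assumes "finite V" "strong_resolving_set V E R"
    and "\<And>R'. strong_resolving_set V E R' \<Longrightarrow> card R \<le> card R'"
  shows "sdim V E = card R"
proof -
  have "{card R' | R'. strong_resolving_set V E R'} \<subseteq> card ` Pow V"
    unfolding strong_resolving_set_def by auto
  then have "finite {card R' | R'. strong_resolving_set V E R'}"
    using assms(1) finite_subset by blast
  then show ?thesis
    unfolding sdim_def using assms(2,3) by (intro Min_eqI) auto
qed

locale graph_distance =
  fixes V :: "'a set" and E :: "'a \<Rightarrow> 'a \<Rightarrow> bool" and d :: "'a \<Rightarrow> 'a \<Rightarrow> nat"
  assumes edge_in_V: "E x y \<Longrightarrow> x \<in> V \<and> y \<in> V"
    and edge_sym: "E x y \<Longrightarrow> E y x"
    and dist_sym: "d x y = d y x"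
    and dist_self [simp]: "d x x = 0"
    and dist_edge_le: "E x y \<Longrightarrow> w \<in> V \<Longrightarrow> d x w \<le> d y w + 1"
    and dist_descent: "u \<in> V \<Longrightarrow> v \<in> V \<Longrightarrow> u \<noteq> v \<Longrightarrow> \<exists>y. E u y \<and> d y v + 1 = d u v"
begin

lemma dist_eq_0_iff:
  assumes "u \<in> V" "v \<in> V"
  shows "d u v = 0 \<longleftrightarrow> u = v"
proof
  assume "d u v = 0"
  show "u = v"
  proof (rule ccontr)
    assume "u \<noteq> v"
    then obtain y where "d y v + 1 = d u v" using dist_descent assms by blast
    then show False using \<open>d u v = 0\<close> by simp
  qed
qed simp

lemma walk_of_length_dist:
  "u \<in> V \<Longrightarrow> v \<in> V \<Longrightarrow> \<exists>p. is_walk E p \<and> hd p = u \<and> last p = v \<and> length p = Suc (d u v)"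
proof (induction "d u v" arbitrary: u)
  case 0
  then have "u = v" using dist_eq_0_iff by simp
  then show ?case by (intro exI[of _ "[u]"]) (simp add: is_walk_def)
next
  case (Suc m)
  then have "u \<noteq> v" by fastforce
  then obtain y where y: "E u y" "d y v + 1 = d u v" using dist_descent Suc.prems by blast
  then have "y \<in> V" "m = d y v" using edge_in_V Suc.hyps(2) by auto
  then obtain p where p: "is_walk E p" "hd p = y" "last p = v" "length p = Suc (d y v)"
    using Suc.hyps(1) Suc.prems(2) by blast
  then have "p = y # tl p" by (cases p) auto
  then have "is_walk E (u # p)" using p(1) y(1) is_walk_Cons_Cons by metis
  then show ?case using p y(2) by (intro exI[of _ "u # p"]) (auto simp: is_walk_def)
qed

lemma dist_le_walk_length: "is_walk E p \<Longrightarrow> w \<in> V \<Longrightarrow> d (hd p) w \<le> d (last p) w + (length p - 1)"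
proof (induction p)
  case (Cons x p)
  show ?case
  proof (cases p)
    case p: (Cons y ys)
    have "E x y" "is_walk E p" using Cons.prems(1) unfolding p is_walk_Cons_Cons by simp_all
    then show ?thesis using Cons.IH Cons.prems(2) dist_edge_le[OF \<open>E x y\<close> Cons.prems(2)] p by simp
  qed simp
qed (simp add: is_walk_def)

lemma gdist_eq_dist:
  assumes "u \<in> V" "v \<in> V"
  shows "gdist E u v = d u v"
  unfolding gdist_def
proof (rule Least_equality)
  show "\<exists>p. is_walk E p \<and> hd p = u \<and> last p = v \<and> length p = Suc (d u v)"
    using walk_of_length_dist assms by blast
next
  fix m assume "\<exists>p. is_walk E p \<and> hd p = u \<and> last p = v \<and> length p = Suc m"
  then obtain p where "is_walk E p" "hd p = u" "last p = v" "length p = Suc m" by blast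
  then show "d u v \<le> m" using dist_le_walk_length[of p v] assms(2) by simp
qed

lemma dist_triangle: "u \<in> V \<Longrightarrow> v \<in> V \<Longrightarrow> w \<in> V \<Longrightarrow> d u w \<le> d u v + d v w"
proof (induction "d u v" arbitrary: u)
  case 0
  then show ?case using dist_eq_0_iff by simp
next
  case (Suc m)
  then have "u \<noteq> v" by fastforce
  then obtain y where y: "E u y" "d y v + 1 = d u v" using dist_descent Suc.prems by blast
  then have "y \<in> V" "m = d y v" using edge_in_V Suc.hyps(2) by auto
  then have "d y w \<le> d y v + d v w" using Suc.hyps(1) Suc.prems(2,3) by blast
  then show ?case using y dist_edge_le[OF y(1) Suc.prems(3)] by linarith
qed

lemma mem_interval_iff:
  "u \<in> V \<Longrightarrow> w \<in> V \<Longrightarrow> v \<in> interval V E u w \<longleftrightarrow> v \<in> V \<and> d u v + d v w = d u w"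
  unfolding interval_def using gdist_eq_dist by auto

definition maximally_distant :: "'a \<Rightarrow> 'a \<Rightarrow> bool" where
  "maximally_distant u v \<longleftrightarrow> (\<forall>y. E v y \<longrightarrow> d y u \<le> d v u)"

lemma maximally_distant_interval_end:
  assumes "u \<in> V" "w \<in> V" "maximally_distant u v" "v \<in> interval V E u w"
  shows "w = v"
proof (rule ccontr)
  assume "w \<noteq> v"
  have v: "v \<in> V" and uvw: "d u v + d v w = d u w" using assms mem_interval_iff by auto
  obtain y where y: "E v y" "d y w + 1 = d v w" using dist_descent[OF v assms(2)] \<open>w \<noteq> v\<close> by metis
  then have "d u w \<le> d u y + d y w" using dist_triangle assms edge_in_V by blast
  moreover have "d y u \<le> d v u" using assms(3) y(1) unfolding maximally_distant_def by blast
  ultimately show False using uvw y dist_sym[of u y] dist_sym[of u v] by linarith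
qed

lemma strongly_resolves_maximally_distant:
  assumes "u \<in> V" "v \<in> V" "w \<in> V" "maximally_distant u v" "maximally_distant v u"
    and "strongly_resolves V E w u v"
  shows "w = u \<or> w = v"
  using assms maximally_distant_interval_end unfolding strongly_resolves_def by blast

lemma strong_resolving_set_hits_maximally_distant:
  assumes "strong_resolving_set V E R" "u \<in> V" "v \<in> V" "u \<noteq> v"
    and "maximally_distant u v" "maximally_distant v u"
  shows "u \<in> R \<or> v \<in> R"
proof -
  obtain w where "w \<in> R" "strongly_resolves V E w u v"
    using assms(1-4) unfolding strong_resolving_set_def by blast
  moreover have "w \<in> V" using assms(1) \<open>w \<in> R\<close> unfolding strong_resolving_set_def by blast
  ultimately show ?thesis using strongly_resolves_maximally_distant assms by blast
qed

lemma exists_maximally_distant_beyond: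
  assumes "finite V" "u \<in> V" "v \<in> V"
  obtains v' where "v' \<in> V" "d u v + d v v' = d u v'" "maximally_distant u v'"
proof -
  define S where "S = {z \<in> V. d u v + d v z = d u z}"
  have "finite S" "v \<in> S" using assms unfolding S_def by auto
  then have "Max (d u ` S) \<in> d u ` S" by (intro Max_in) auto
  then obtain v' where v': "v' \<in> S" "d u v' = Max (d u ` S)" by auto
  have "maximally_distant u v'" unfolding maximally_distant_def
  proof (intro allI impI)
    fix y assume "E v' y"
    then have y: "y \<in> V" "d y u \<le> d v' u + 1" "d y v \<le> d v' v + 1"
      using edge_in_V dist_edge_le[OF edge_sym] assms by auto
    show "d y u \<le> d v' u"
    proof (rule ccontr)
      assume "\<not> d y u \<le> d v' u"
      then have "d u v + d v y = d u y"
        using y v' dist_triangle[OF assms(2,3) y(1)]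
          dist_sym[of u y] dist_sym[of u v'] dist_sym[of v v'] dist_sym[of v y]
        unfolding S_def by simp
      then have "d u y \<le> d u v'" using y(1) v' \<open>finite S\<close> unfolding S_def by simp
      then show False using \<open>\<not> d y u \<le> d v' u\<close> dist_sym by simp
    qed
  qed
  then show ?thesis using that v'(1) unfolding S_def by blast
qed

lemma exists_maximally_distant_resolving:
  assumes "finite V" "u \<in> V" "v \<in> V"
  obtains a b where "a \<in> V" "b \<in> V" "maximally_distant a b" "maximally_distant b a"
    "strongly_resolves V E a u v" "strongly_resolves V E b u v"
proof -
  obtain b where b: "b \<in> V" "d u v + d v b = d u b" "maximally_distant u b"
    using exists_maximally_distant_beyond assms by blast
  obtain a where a: "a \<in> V" "d b u + d u a = d b a" "maximally_distant b a"
    using exists_maximally_distant_beyond assms b(1) by blast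
  have "maximally_distant a b" unfolding maximally_distant_def
  proof (intro allI impI)
    fix y assume "E b y"
    then have "y \<in> V" "d y u \<le> d b u" using b(3) edge_in_V unfolding maximally_distant_def by blast+
    then show "d y a \<le> d b a" using a(1,2) dist_triangle[of y u a] assms(2) by linarith
  qed
  moreover have "strongly_resolves V E b u v"
    using b assms mem_interval_iff unfolding strongly_resolves_def by blast
  moreover have "d v u + d u a = d v a"
    using a(1,2) b(1,2) dist_triangle[of a u v] dist_triangle[of a v b] assms(2,3)
      dist_sym[of b u] dist_sym[of a b] dist_sym[of a v] dist_sym[of v u] dist_sym[of a u]
    by linarith
  then have "strongly_resolves V E a u v"
    using a assms mem_interval_iff unfolding strongly_resolves_def by blast
  ultimately show ?thesis using that a b by blast
qed

lemma strong_resolving_setI_maximally_distant: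
  assumes "finite V" "R \<subseteq> V"
    and "\<And>a b. a \<in> V \<Longrightarrow> b \<in> V \<Longrightarrow> maximally_distant a b \<Longrightarrow> maximally_distant b a \<Longrightarrow> a \<in> R \<or> b \<in> R"
  shows "strong_resolving_set V E R"
  unfolding strong_resolving_set_def
proof (intro conjI ballI impI)
  fix u v assume "u \<in> V" "v \<in> V"
  then obtain a b where "a \<in> V" "b \<in> V" "maximally_distant a b" "maximally_distant b a"
    "strongly_resolves V E a u v" "strongly_resolves V E b u v"
    using exists_maximally_distant_resolving assms(1) by metis
  then show "\<exists>w\<in>R. strongly_resolves V E w u v" using assms(3) by blast
qed (use assms in auto)

end

section \<open>Vertices and edges of the layer cycle graph\<close>

lemma lcg_vert_nonempty: "lcg_vert n k xs \<Longrightarrow> xs \<noteq> []"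
  unfolding lcg_vert_def by auto

lemma lcg_vert_length_le: "lcg_vert n k xs \<Longrightarrow> length xs \<le> k"
  unfolding lcg_vert_def by auto

lemma lcg_vert_single: "lcg_vert n k [a] \<longleftrightarrow> a < n \<and> 1 \<le> k"
  unfolding lcg_vert_def by auto

lemma lcg_vert_snoc:
  assumes "p \<noteq> []"
  shows "lcg_vert n k (p @ [a]) \<longleftrightarrow>
    lcg_vert n k p \<and> (length p = 1 \<or> last p \<noteq> 0) \<and> a < n \<and> length p < k"
proof
  assume H: "lcg_vert n k (p @ [a])"
  have mid: "1 \<le> (p @ [a]) ! i \<and> (p @ [a]) ! i < n" if "0 < i" "i < length p" for i
    using H that unfolding lcg_vert_def by auto
  have hd: "hd p < n" using H assms unfolding lcg_vert_def by auto
  have lastp: "last p < n \<and> (length p = 1 \<or> last p \<noteq> 0)"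
  proof (cases "length p = 1")
    case True
    then have "last p = hd p" by (cases p) auto
    then show ?thesis using hd True by auto
  next
    case False
    then have "0 < length p - 1" "length p - 1 < length p" using assms by (cases p; auto)+
    then show ?thesis using mid[of "length p - 1"] assms by (simp add: nth_append last_conv_nth)
  qed
  have "\<forall>i. 0 < i \<and> i < length p - 1 \<longrightarrow> 1 \<le> p ! i \<and> p ! i < n"
    using mid by (auto simp: nth_append)
  then show "lcg_vert n k p \<and> (length p = 1 \<or> last p \<noteq> 0) \<and> a < n \<and> length p < k"
    using H hd lastp assms unfolding lcg_vert_def by (auto simp: Suc_le_eq)
next
  assume H: "lcg_vert n k p \<and> (length p = 1 \<or> last p \<noteq> 0) \<and> a < n \<and> length p < k"
  have "1 \<le> (p @ [a]) ! i \<and> (p @ [a]) ! i < n" if "0 < i" "i < length p" for i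
  proof (cases "i < length p - 1")
    case True
    then show ?thesis using H that unfolding lcg_vert_def by (auto simp: nth_append)
  next
    case False
    then have "i = length p - 1" using that by auto
    then have "(p @ [a]) ! i = last p" "length p \<noteq> 1"
      using assms that by (auto simp: nth_append last_conv_nth)
    then show ?thesis using H unfolding lcg_vert_def by auto
  qed
  then show "lcg_vert n k (p @ [a])" using H assms unfolding lcg_vert_def by (auto simp: hd_append)
qed

lemma lcg_vert_Cons_snoc:
  "lcg_vert n k (a # ys @ [j]) \<longleftrightarrow> a < n \<and> set ys \<subseteq> {1..<n} \<and> j < n \<and> length ys + 2 \<le> k"
proof -
  have "(\<forall>i. 0 < i \<and> i < length (a # ys @ [j]) - 1 \<longrightarrow>
          1 \<le> (a # ys @ [j]) ! i \<and> (a # ys @ [j]) ! i < n)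
      \<longleftrightarrow> (\<forall>i < length ys. 1 \<le> ys ! i \<and> ys ! i < n)"
    by (auto simp: nth_append gr0_conv_Suc)
  also have "\<dots> \<longleftrightarrow> set ys \<subseteq> {1..<n}"
    unfolding subset_iff atLeastLessThan_iff in_set_conv_nth by (auto simp: Suc_le_eq)
  finally show ?thesis unfolding lcg_vert_def by auto
qed

lemma lcg_vert_entries_less: "lcg_vert n k xs \<Longrightarrow> set xs \<subseteq> {..<n}"
proof (induction xs rule: rev_induct)
  case (snoc a p)
  then show ?case by (cases "p = []") (auto simp: lcg_vert_single lcg_vert_snoc)
qed simp

lemma lcg_vert_prefix: "lcg_vert n k (p @ t # ys) \<Longrightarrow> p \<noteq> [] \<Longrightarrow> lcg_vert n k (p @ [t])"
proof (induction ys rule: rev_induct)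
  case (snoc z ys)
  then show ?case using lcg_vert_snoc[of "p @ t # ys"] by auto
qed simp

lemma finite_lcg_V: "finite (lcg_V n k)"
proof -
  have "lcg_V n k \<subseteq> {xs. set xs \<subseteq> {..<n} \<and> length xs \<le> k}"
    unfolding lcg_V_def using lcg_vert_entries_less lcg_vert_length_le by blast
  then show ?thesis using finite_lists_length_le[of "{..<n}" k] finite_subset by blast
qed

lemma lcg_adj_sym: "lcg_adj n k x y = lcg_adj n k y x"
  unfolding lcg_adj_def by auto

lemma lcg_adj_vert: "lcg_adj n k x y \<Longrightarrow> lcg_vert n k x \<and> lcg_vert n k y"
  unfolding lcg_adj_def by auto

lemma lcg_adj_cases:
  assumes "lcg_adj n k x y"
  obtains (cycle) p a b
      where "x = p @ [a]" "y = p @ [b]" "a < n" "b < n" "b = cyc_succ n a \<or> a = cyc_succ n b"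
    | (child) "y = x @ [0]"
    | (parent) "x = y @ [0]"
proof -
  have "x \<noteq> []" "y \<noteq> []" "last x < n" "last y < n"
    using assms lcg_vert_nonempty unfolding lcg_adj_def lcg_vert_def by auto
  then have "\<exists>p a b. x = p @ [a] \<and> y = p @ [b] \<and> a < n \<and> b < n \<and>
      (b = cyc_succ n a \<or> a = cyc_succ n b)"
    if "butlast x = butlast y" "last y = (last x + 1) mod n \<or> last x = (last y + 1) mod n"
    using that Suc_mod_eq_cyc_succ append_butlast_last_id by (metis Suc_eq_plus1)
  then show ?thesis using assms that unfolding lcg_adj_def by blast
qed

lemma lcg_adj_cycle:
  assumes "lcg_vert n k (p @ [a])" "b < n" "b = cyc_succ n a \<or> a = cyc_succ n b"
  shows "lcg_adj n k (p @ [a]) (p @ [b])"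
proof -
  have "a < n" using lcg_vert_entries_less[OF assms(1)] by auto
  moreover have "lcg_vert n k (p @ [b])"
    using assms by (cases "p = []") (auto simp: lcg_vert_single lcg_vert_snoc)
  ultimately show ?thesis using assms unfolding lcg_adj_def by (auto simp: Suc_mod_eq_cyc_succ)
qed

lemma lcg_adj_child: "lcg_vert n k x \<Longrightarrow> lcg_vert n k (x @ [0]) \<Longrightarrow> lcg_adj n k x (x @ [0])"
  using lcg_vert_nonempty lcg_vert_snoc unfolding lcg_adj_def by blast

lemma lcg_cycle_step_toward:
  assumes "lcg_vert n k (p @ [a])" "c < n" "a \<noteq> c"
  obtains b where "lcg_adj n k (p @ [a]) (p @ [b])" "cyc_dist n b c + 1 = cyc_dist n a c"
proof -
  have "a < n" using lcg_vert_entries_less[OF assms(1)] by auto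
  from cyc_dist_step_toward[OF this assms(2,3)] show ?thesis
  proof
    assume "cyc_dist n (cyc_succ n a) c + 1 = cyc_dist n a c"
    then show ?thesis using that lcg_adj_cycle[OF assms(1) cyc_succ_less[OF \<open>a < n\<close>]] by blast
  next
    assume "cyc_dist n (cyc_pred n a) c + 1 = cyc_dist n a c"
    then show ?thesis
      using that lcg_adj_cycle[OF assms(1) cyc_pred_less[OF \<open>a < n\<close>]] cyc_succ_pred[OF \<open>a < n\<close>]
      by simp
  qed
qed

lemma lcg_cycle_step_away:
  assumes "3 \<le> n" "lcg_vert n k (p @ [b])" "c < n" "2 * cyc_dist n c b + 1 < n"
  obtains b' where "lcg_adj n k (p @ [b]) (p @ [b'])" "cyc_dist n c b' = cyc_dist n c b + 1"
proof -
  have "b < n" using lcg_vert_entries_less[OF assms(2)] by auto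
  from cyc_dist_step_away[OF assms(1,3) this assms(4)] show ?thesis
  proof
    assume "cyc_dist n c (cyc_succ n b) = cyc_dist n c b + 1"
    then show ?thesis using that lcg_adj_cycle[OF assms(2) cyc_succ_less[OF \<open>b < n\<close>]] by blast
  next
    assume "cyc_dist n c (cyc_pred n b) = cyc_dist n c b + 1"
    then show ?thesis
      using that lcg_adj_cycle[OF assms(2) cyc_pred_less[OF \<open>b < n\<close>]] cyc_succ_pred[OF \<open>b < n\<close>]
      by simp
  qed
qed

section \<open>The distance in the layer cycle graph\<close>

text \<open>A shortest path from xs to ys climbs to the cycle containing the first position where the two
  lists differ, moves around that cycle and descends again; descending from a vertex into the cycle
  below it costs one edge to its head 0, from which entry t is cyc_dist n 0 t further.\<close>

fun lcg_tail_dist :: "nat \<Rightarrow> nat list \<Rightarrow> nat" where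
  "lcg_tail_dist n [] = 0"
| "lcg_tail_dist n (t # ts) = cyc_dist n 0 t + 1 + lcg_tail_dist n ts"

fun lcg_dist :: "nat \<Rightarrow> nat list \<Rightarrow> nat list \<Rightarrow> nat" where
  "lcg_dist n [] ys = lcg_tail_dist n ys"
| "lcg_dist n (x # xs) [] = lcg_tail_dist n (x # xs)"
| "lcg_dist n (x # xs) (y # ys) =
    (if x = y then lcg_dist n xs ys else cyc_dist n x y + lcg_tail_dist n xs + lcg_tail_dist n ys)"

lemma lcg_tail_dist_append [simp]:
  "lcg_tail_dist n (xs @ ys) = lcg_tail_dist n xs + lcg_tail_dist n ys"
  by (induction xs) auto

lemma lcg_dist_Nil2 [simp]: "lcg_dist n xs [] = lcg_tail_dist n xs"
  by (cases xs) auto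

lemma lcg_dist_self [simp]: "lcg_dist n xs xs = 0"
  by (induction xs) auto

lemma lcg_dist_sym: "lcg_dist n xs ys = lcg_dist n ys xs"
  by (induction n xs ys rule: lcg_dist.induct) (auto simp: cyc_dist_sym)

lemma lcg_dist_append_prefix [simp]: "lcg_dist n (p @ xs) (p @ ys) = lcg_dist n xs ys"
  by (induction p) auto

lemma lcg_dist_prefix: "lcg_dist n p (p @ ys) = lcg_tail_dist n ys"
  using lcg_dist_append_prefix[of n p "[]" ys] by simp

lemma lcg_dist_same_cycle: "lcg_dist n (p @ [a]) (p @ [b]) = cyc_dist n a b"
  by simp

lemma lcg_dist_snoc_Cons: "lcg_dist n (p @ [a]) (p @ b # ys) = cyc_dist n a b + lcg_tail_dist n ys"
  using lcg_dist_append_prefix[of n p "[a]" "b # ys"] by simp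

lemma lcg_dist_snoc_not_prefix:
  "\<nexists>b ys. v = p @ b # ys \<Longrightarrow> lcg_dist n (p @ [t]) v = lcg_dist n p v + cyc_dist n 0 t + 1"
proof (induction p arbitrary: v)
  case Nil
  then show ?case by (cases v) auto
next
  case (Cons x p)
  then show ?case by (cases v) auto
qed

lemma lcg_dist_child_le:
  "lcg_dist n (x @ [0]) w \<le> lcg_dist n x w + 1 \<and> lcg_dist n x w \<le> lcg_dist n (x @ [0]) w + 1"
proof (induction x arbitrary: w)
  case Nil
  then show ?case by (cases w) auto
next
  case (Cons z x)
  then show ?case by (cases w) auto
qed

lemma lcg_dist_snoc_le:
  "set w \<subseteq> {..<n} \<Longrightarrow> a < n \<Longrightarrow> b < n \<Longrightarrow>
    lcg_dist n (p @ [a]) w \<le> lcg_dist n (p @ [b]) w + cyc_dist n a b"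
proof (induction p arbitrary: w)
  case Nil
  then show ?case
    using cyc_dist_triangle[of 0 n b a] cyc_dist_triangle[of a n b "hd w"]
    by (cases w) (auto simp: cyc_dist_sym)
next
  case (Cons x p)
  then show ?case using cyc_dist_triangle[of 0 n b a] by (cases w) (auto simp: cyc_dist_sym)
qed

lemma lcg_dist_edge_le:
  assumes "3 \<le> n" "lcg_adj n k x y" "lcg_vert n k w"
  shows "lcg_dist n x w \<le> lcg_dist n y w + 1"
  using assms(2)
proof (cases rule: lcg_adj_cases)
  case (cycle p a b)
  then have "cyc_dist n a b = 1" using cyc_dist_succ[OF assms(1)] cyc_dist_sym by metis
  then show ?thesis
    using lcg_dist_snoc_le[OF lcg_vert_entries_less[OF assms(3)] \<open>a < n\<close> \<open>b < n\<close>] cycle by simp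
qed (use lcg_dist_child_le in auto)

lemma lcg_dist_descent_climb:
  assumes "lcg_vert n k (p @ [a])" "p \<noteq> []" "\<nexists>b ys. v = p @ b # ys"
  shows "\<exists>y. lcg_adj n k (p @ [a]) y \<and> lcg_dist n y v + 1 = lcg_dist n (p @ [a]) v"
proof -
  have climb: "lcg_dist n (p @ [c]) v = lcg_dist n p v + cyc_dist n 0 c + 1" for c
    using lcg_dist_snoc_not_prefix assms(3) by blast
  show ?thesis
  proof (cases "a = 0")
    case True
    then have "lcg_adj n k (p @ [a]) p"
      using lcg_adj_child[of n k p] lcg_vert_snoc[OF assms(2)] assms(1) lcg_adj_sym by metis
    then show ?thesis using climb[of 0] True by auto
  next
    case False
    have "0 < n" using lcg_vert_entries_less[OF assms(1)] by auto
    then obtain c where "lcg_adj n k (p @ [a]) (p @ [c])" "cyc_dist n c 0 + 1 = cyc_dist n a 0"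
      using lcg_cycle_step_toward[OF assms(1) _ False] by blast
    then show ?thesis using climb[of a] climb[of c] cyc_dist_sym[of n 0] by auto
  qed
qed

lemma lcg_dist_descent:
  assumes "lcg_vert n k u" "lcg_vert n k v" "u \<noteq> v"
  shows "\<exists>y. lcg_adj n k u y \<and> lcg_dist n y v + 1 = lcg_dist n u v"
proof (cases "\<exists>t ys. v = u @ t # ys")
  case True
  then obtain t ys where v: "v = u @ t # ys" by blast
  have "u \<noteq> []" using lcg_vert_nonempty assms(1) .
  then have "lcg_vert n k (u @ [0])"
    using lcg_vert_prefix[of n k u t ys] lcg_vert_snoc[of u n k] assms v by auto
  then have "lcg_adj n k u (u @ [0])" using lcg_adj_child assms(1) by blast
  moreover have "lcg_dist n (u @ [0]) v + 1 = lcg_dist n u v"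
    using lcg_dist_snoc_Cons[of n u 0 t ys] lcg_dist_prefix[of n u "t # ys"] v by simp
  ultimately show ?thesis by blast
next
  case not_below_u: False
  obtain p a where u: "u = p @ [a]" using lcg_vert_nonempty[OF assms(1)] rev_exhaust by blast
  show ?thesis
  proof (cases "\<exists>b ys. v = p @ b # ys")
    case True
    then obtain b ys where v: "v = p @ b # ys" by blast
    have "a \<noteq> b"
    proof
      assume "a = b"
      then have "v = u @ ys" "ys \<noteq> []" using u v assms(3) by auto
      then show False using not_below_u by (cases ys) auto
    qed
    moreover have "b < n" using lcg_vert_entries_less[OF assms(2)] v by auto
    ultimately obtain c where c: "lcg_adj n k u (p @ [c])" "cyc_dist n c b + 1 = cyc_dist n a b"
      using lcg_cycle_step_toward[of n k p a b] assms(1) u by blast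
    have "lcg_dist n (p @ [c]) v + 1 = lcg_dist n u v"
      using c(2) lcg_dist_snoc_Cons[of n p c b ys] lcg_dist_snoc_Cons[of n p a b ys] u v by simp
    then show ?thesis using c(1) by blast
  next
    case False
    moreover have "p \<noteq> []" using False lcg_vert_nonempty[OF assms(2)] by (cases v) auto
    ultimately show ?thesis using lcg_dist_descent_climb[of n k p a v] assms(1) u by simp
  qed
qed

lemma lcg_graph_distance:
  assumes "3 \<le> n"
  shows "graph_distance (lcg_V n k) (lcg_adj n k) (lcg_dist n)"
proof
  show "lcg_adj n k x y \<Longrightarrow> x \<in> lcg_V n k \<and> y \<in> lcg_V n k" for x y
    using lcg_adj_vert unfolding lcg_V_def by simp
  show "lcg_adj n k x y \<Longrightarrow> lcg_adj n k y x" for x y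
    using lcg_adj_sym by metis
  show "lcg_dist n x y = lcg_dist n y x" for x y
    by (rule lcg_dist_sym)
  show "lcg_dist n x x = 0" for x
    by simp
  show "lcg_adj n k x y \<Longrightarrow> w \<in> lcg_V n k \<Longrightarrow> lcg_dist n x w \<le> lcg_dist n y w + 1" for x y w
    using lcg_dist_edge_le[OF assms] unfolding lcg_V_def by simp
  show "u \<in> lcg_V n k \<Longrightarrow> v \<in> lcg_V n k \<Longrightarrow> u \<noteq> v \<Longrightarrow>
      \<exists>y. lcg_adj n k u y \<and> lcg_dist n y v + 1 = lcg_dist n u v"
    for u v
    using lcg_dist_descent unfolding lcg_V_def by simp
qed

section \<open>Mutually maximally distant vertices of the layer cycle graph\<close>

text \<open>A cycle of the last layer is named by its attachment vertex q; its non-head vertices q @ [j],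
  1 \<le> j < n, are the leaves of the graph.\<close>

definition lcg_leaf_cycles :: "nat \<Rightarrow> nat \<Rightarrow> nat list set" where
  "lcg_leaf_cycles n k = {a # ys | a ys. a < n \<and> set ys \<subseteq> {1..<n} \<and> length ys = k - 2}"

lemma finite_lcg_leaf_cycles: "finite (lcg_leaf_cycles n k)"
  and card_lcg_leaf_cycles: "card (lcg_leaf_cycles n k) = n * (n - 1) ^ (k - 2)"
proof -
  define L where "L = {ys. set ys \<subseteq> {1..<n} \<and> length ys = k - 2}"
  have leaf_cycles: "lcg_leaf_cycles n k = (\<lambda>(a, ys). a # ys) ` ({..<n} \<times> L)"
    unfolding lcg_leaf_cycles_def L_def by auto
  have "inj_on (\<lambda>(a, ys). a # ys) ({..<n} \<times> L)"
    unfolding inj_on_def by auto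
  moreover have "finite L" "card L = (n - 1) ^ (k - 2)"
    unfolding L_def by (simp_all add: finite_lists_length_eq card_lists_length_eq)
  ultimately show "finite (lcg_leaf_cycles n k)"
    and "card (lcg_leaf_cycles n k) = n * (n - 1) ^ (k - 2)"
    unfolding leaf_cycles by (simp_all add: card_image card_cartesian_product)
qed

lemma lcg_leaf_cycle_vert:
  assumes "2 \<le> k" "q \<in> lcg_leaf_cycles n k" "j < n"
  shows "lcg_vert n k (q @ [j])"
  using assms lcg_vert_Cons_snoc unfolding lcg_leaf_cycles_def by auto

lemma lcg_leaf_cycle_length: "2 \<le> k \<Longrightarrow> q \<in> lcg_leaf_cycles n k \<Longrightarrow> length q = k - 1"
  unfolding lcg_leaf_cycles_def by auto

lemma lcg_leaf_decomp:
  assumes "2 \<le> k" "lcg_vert n k v" "length v = k" "last v \<noteq> 0"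
  obtains q j where "v = q @ [j]" "q \<in> lcg_leaf_cycles n k" "1 \<le> j" "j < n"
proof -
  obtain a w where "v = a # w" using lcg_vert_nonempty[OF assms(2)] list.exhaust by blast
  moreover have "w \<noteq> []" using assms(1,3) \<open>v = a # w\<close> by auto
  moreover obtain ys j where "w = ys @ [j]" using \<open>w \<noteq> []\<close> rev_exhaust by blast
  ultimately have v: "v = a # ys @ [j]" by simp
  then have entries: "a < n \<and> set ys \<subseteq> {1..<n} \<and> j < n" and "length ys = k - 2"
    using assms(2,3) lcg_vert_Cons_snoc by auto
  then have "a # ys \<in> lcg_leaf_cycles n k" unfolding lcg_leaf_cycles_def by blast
  moreover have "1 \<le> j" using assms(4) v by simp
  ultimately show ?thesis using that[of "a # ys" j] v entries by simp
qed

lemma lcg_dist_other_leaf_cycle: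
  assumes "2 \<le> k" "q \<in> lcg_leaf_cycles n k" "r \<in> lcg_leaf_cycles n k" "q \<noteq> r"
  shows "lcg_dist n (r @ [b]) (q @ [a]) = lcg_dist n r (q @ [a]) + cyc_dist n 0 b + 1"
proof (rule lcg_dist_snoc_not_prefix)
  show "\<nexists>t ys. q @ [a] = r @ t # ys"
  proof (intro notI, elim exE)
    fix t ys assume eq: "q @ [a] = r @ t # ys"
    moreover have "length q = length r" using lcg_leaf_cycle_length assms(1-3) by simp
    ultimately have "ys = []" using arg_cong[OF eq, of length] by simp
    then show False using eq assms(4) by simp
  qed
qed

lemma lcg_adj_leaf:
  assumes "2 \<le> k" "q \<in> lcg_leaf_cycles n k" "1 \<le> b" "lcg_adj n k (q @ [b]) y"
  obtains b' where "y = q @ [b']" "b' < n"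
  using assms(4)
proof (cases rule: lcg_adj_cases)
  case (cycle p c b')
  then show ?thesis using that by simp
next
  case child
  moreover have "length q = k - 1" using lcg_leaf_cycle_length assms(1,2) .
  moreover have "length y \<le> k" using lcg_adj_vert lcg_vert_length_le assms(4) by blast
  ultimately show ?thesis using assms(1) by simp
next
  case parent
  then show ?thesis using assms(3) by simp
qed

text \<open>0 # replicate (k - 2) 1 is an arbitrary fixed leaf cycle.\<close>

definition lcg_strong_basis :: "nat \<Rightarrow> nat \<Rightarrow> nat list set" where
  "lcg_strong_basis n k =
    (\<lambda>(q, j). q @ [j]) ` (lcg_leaf_cycles n k \<times> {1..(n + 1) div 2})
      - {(0 # replicate (k - 2) 1) @ [(n + 1) div 2]}"

context
  fixes n k :: nat
  assumes n3: "3 \<le> n" and k2: "2 \<le> k"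
begin

interpretation lcg: graph_distance "lcg_V n k" "lcg_adj n k" "lcg_dist n"
  using lcg_graph_distance[OF n3] .

lemma lcg_farther_neighbor_of_parent:
  assumes v: "lcg_vert n k v" and "lcg_vert n k (v @ [0])"
  obtains y where "lcg_adj n k v y" "lcg_dist n v u < lcg_dist n y u"
proof -
  obtain p a where pa: "v = p @ [a]" using lcg_vert_nonempty[OF v] rev_exhaust by blast
  show ?thesis
  proof (cases "\<exists>b ys. u = v @ b # ys")
    case True
    then obtain b ys where u: "u = p @ a # b # ys" using pa by auto
    have "a < n" using lcg_vert_entries_less[OF v] pa by auto
    have "lcg_adj n k v (p @ [cyc_succ n a])"
      using lcg_adj_cycle v pa cyc_succ_less[OF \<open>a < n\<close>] by auto
    moreover have "lcg_dist n v u < lcg_dist n (p @ [cyc_succ n a]) u"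
      using lcg_dist_snoc_Cons[of n p _ a "b # ys"] cyc_dist_succ[OF n3 \<open>a < n\<close>] cyc_dist_sym u pa
      by simp
    ultimately show ?thesis using that by blast
  next
    case False
    then show ?thesis
      using that lcg_adj_child[OF v assms(2)] lcg_dist_snoc_not_prefix[of u v n 0] by simp
  qed
qed

lemma lcg_farther_neighbor_of_head:
  assumes "lcg_vert n k u" "lcg_vert n k (p @ [0])" "p \<noteq> []"
  obtains y where "lcg_adj n k (p @ [0]) y" "lcg_dist n (p @ [0]) u < lcg_dist n y u"
proof -
  have p: "lcg_vert n k p" "length p = 1 \<or> last p \<noteq> 0" using assms(2,3) lcg_vert_snoc by auto
  have up: "lcg_adj n k (p @ [0]) p" using lcg_adj_child[OF p(1) assms(2)] lcg_adj_sym by metis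
  show ?thesis
  proof (cases "\<exists>b ys. u = p @ b # ys")
    case True
    then obtain b ys where u: "u = p @ b # ys" by blast
    have "b \<noteq> 0 \<or> ys = []"
    proof (rule ccontr)
      assume "\<not> (b \<noteq> 0 \<or> ys = [])"
      then obtain c ys' where "u = (p @ [0]) @ c # ys'" using u by (cases ys) auto
      then have "lcg_vert n k ((p @ [0]) @ [c])" using lcg_vert_prefix assms(1) by blast
      then show False using lcg_vert_snoc[of "p @ [0]"] assms(3) by simp
    qed
    then have "lcg_dist n (p @ [0]) u < lcg_dist n p u"
      using lcg_dist_snoc_Cons[of n p 0 b ys] lcg_dist_prefix[of n p "b # ys"] u by auto
    then show ?thesis using that up by blast
  next
    case False
    have "lcg_adj n k (p @ [0]) (p @ [1])"
      using lcg_adj_cycle[OF assms(2)] n3 unfolding cyc_succ_def by simp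
    moreover have "cyc_dist n 0 1 = 1"
      using cyc_dist_succ[OF n3, of 0] n3 unfolding cyc_succ_def by simp
    then have "lcg_dist n (p @ [0]) u < lcg_dist n (p @ [1]) u"
      using lcg_dist_snoc_not_prefix[OF False] by simp
    ultimately show ?thesis using that by blast
  qed
qed

lemma lcg_maximally_distant_leaf:
  assumes "lcg_vert n k u" "lcg_vert n k v" "lcg.maximally_distant u v"
  shows "length v = k \<and> last v \<noteq> 0"
proof (rule ccontr)
  assume not_leaf: "\<not> (length v = k \<and> last v \<noteq> 0)"
  obtain p a where v: "v = p @ [a]" using lcg_vert_nonempty[OF assms(2)] rev_exhaust by blast
  have "length v \<le> k" using lcg_vert_length_le assms(2) .
  obtain y where "lcg_adj n k v y" "lcg_dist n v u < lcg_dist n y u"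
  proof (cases "lcg_vert n k (v @ [0])")
    case True
    then show ?thesis using lcg_farther_neighbor_of_parent[OF assms(2) True] that by blast
  next
    case False
    then have no_child: "\<not> ((length v = 1 \<or> last v \<noteq> 0) \<and> length v < k)"
      using lcg_vert_snoc[of v n k 0] lcg_vert_nonempty[OF assms(2)] assms(2) n3 by auto
    then have "last v = 0" using not_leaf \<open>length v \<le> k\<close> by fastforce
    moreover have "length v \<noteq> 1" using no_child k2 by auto
    ultimately have "a = 0" "p \<noteq> []" using v by auto
    then have "lcg_vert n k (p @ [0])" using assms(2) v by simp
    then obtain y where "lcg_adj n k (p @ [0]) y" "lcg_dist n (p @ [0]) u < lcg_dist n y u"
      using lcg_farther_neighbor_of_head[OF assms(1)] \<open>p \<noteq> []\<close> by blast
    then show ?thesis using that v \<open>a = 0\<close> by simp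
  qed
  then show False using assms(3) unfolding lcg.maximally_distant_def by (meson not_le)
qed

lemma lcg_maximally_distant_same_cycle_iff:
  assumes "q \<in> lcg_leaf_cycles n k" "a < n" "1 \<le> b" "b < n"
  shows "lcg.maximally_distant (q @ [a]) (q @ [b]) \<longleftrightarrow> n \<le> 2 * cyc_dist n a b + 1"
proof
  assume md: "lcg.maximally_distant (q @ [a]) (q @ [b])"
  show "n \<le> 2 * cyc_dist n a b + 1"
  proof (rule ccontr)
    assume "\<not> ?thesis"
    then obtain b' where "lcg_adj n k (q @ [b]) (q @ [b'])" "cyc_dist n a b' = cyc_dist n a b + 1"
      using lcg_cycle_step_away[OF n3 lcg_leaf_cycle_vert[OF k2 assms(1,4)] assms(2)] by auto
    moreover have "lcg_dist n (q @ [b']) (q @ [a]) \<le> lcg_dist n (q @ [b]) (q @ [a])"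
      if "lcg_adj n k (q @ [b]) (q @ [b'])"
      using md that unfolding lcg.maximally_distant_def by blast
    ultimately show False unfolding lcg_dist_same_cycle by (simp add: cyc_dist_sym)
  qed
next
  assume far: "n \<le> 2 * cyc_dist n a b + 1"
  show "lcg.maximally_distant (q @ [a]) (q @ [b])" unfolding lcg.maximally_distant_def
  proof (intro allI impI)
    fix y assume "lcg_adj n k (q @ [b]) y"
    then obtain b' where y: "y = q @ [b']" "b' < n" using lcg_adj_leaf k2 assms(1,3) by blast
    then have "2 * cyc_dist n b' a \<le> n" using cyc_dist_le_half assms(2) by blast
    then have "cyc_dist n b' a \<le> cyc_dist n b a" using far cyc_dist_sym[of n a b] by linarith
    then show "lcg_dist n y (q @ [a]) \<le> lcg_dist n (q @ [b]) (q @ [a])"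
      unfolding y(1) lcg_dist_same_cycle .
  qed
qed

lemma lcg_maximally_distant_other_cycle_iff:
  assumes "q \<in> lcg_leaf_cycles n k" "r \<in> lcg_leaf_cycles n k" "q \<noteq> r" "a < n" "1 \<le> b" "b < n"
  shows "lcg.maximally_distant (q @ [a]) (r @ [b]) \<longleftrightarrow> n \<le> 2 * cyc_dist n 0 b + 1"
proof
  assume md: "lcg.maximally_distant (q @ [a]) (r @ [b])"
  show "n \<le> 2 * cyc_dist n 0 b + 1"
  proof (rule ccontr)
    assume "\<not> ?thesis"
    then obtain b' where "lcg_adj n k (r @ [b]) (r @ [b'])" "cyc_dist n 0 b' = cyc_dist n 0 b + 1"
      using lcg_cycle_step_away[OF n3 lcg_leaf_cycle_vert[OF k2 assms(2,6)], of 0] n3 by auto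
    moreover have "lcg_dist n (r @ [b']) (q @ [a]) \<le> lcg_dist n (r @ [b]) (q @ [a])"
      if "lcg_adj n k (r @ [b]) (r @ [b'])"
      using md that unfolding lcg.maximally_distant_def by blast
    ultimately show False unfolding lcg_dist_other_leaf_cycle[OF k2 assms(1-3)] by simp
  qed
next
  assume far: "n \<le> 2 * cyc_dist n 0 b + 1"
  show "lcg.maximally_distant (q @ [a]) (r @ [b])" unfolding lcg.maximally_distant_def
  proof (intro allI impI)
    fix y assume "lcg_adj n k (r @ [b]) y"
    then obtain b' where y: "y = r @ [b']" "b' < n" using lcg_adj_leaf k2 assms(2,5) by blast
    then have "2 * cyc_dist n 0 b' \<le> n" using cyc_dist_le_half n3 by simp
    then have "cyc_dist n 0 b' \<le> cyc_dist n 0 b" using far by linarith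
    then show "lcg_dist n y (q @ [a]) \<le> lcg_dist n (r @ [b]) (q @ [a])"
      unfolding y(1) lcg_dist_other_leaf_cycle[OF k2 assms(1-3)] by simp
  qed
qed

section \<open>Strong resolving sets of the layer cycle graph\<close>

lemma lcg_strong_basis_subset: "lcg_strong_basis n k \<subseteq> lcg_V n k"
  unfolding lcg_strong_basis_def lcg_V_def using lcg_leaf_cycle_vert[OF k2] n3 by auto

lemma card_lcg_strong_basis:
  "card (lcg_strong_basis n k) = (n + 1) div 2 * card (lcg_leaf_cycles n k) - 1"
proof -
  let ?S = "lcg_leaf_cycles n k \<times> {1..(n + 1) div 2}"
  have "inj_on (\<lambda>(q, j). q @ [j]) ?S" unfolding inj_on_def by auto
  then have "card ((\<lambda>(q, j). q @ [j]) ` ?S) = (n + 1) div 2 * card (lcg_leaf_cycles n k)"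
    by (simp add: card_image card_cartesian_product)
  moreover have "0 # replicate (k - 2) 1 \<in> lcg_leaf_cycles n k"
    unfolding lcg_leaf_cycles_def using n3 by auto
  then have "(0 # replicate (k - 2) 1) @ [(n + 1) div 2] \<in> (\<lambda>(q, j). q @ [j]) ` ?S"
    using n3 by force
  ultimately show ?thesis unfolding lcg_strong_basis_def by (simp add: card_Diff_singleton)
qed

lemma lcg_strong_basis_hits_maximally_distant:
  assumes "u \<in> lcg_V n k" "v \<in> lcg_V n k" "lcg.maximally_distant u v" "lcg.maximally_distant v u"
  shows "u \<in> lcg_strong_basis n k \<or> v \<in> lcg_strong_basis n k"
proof (rule ccontr)
  assume outside: "\<not> ?thesis"
  have vu: "lcg_vert n k u" and vv: "lcg_vert n k v" using assms(1,2) unfolding lcg_V_def by auto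
  obtain q a where u: "u = q @ [a]" "q \<in> lcg_leaf_cycles n k" "1 \<le> a" "a < n"
    using lcg_leaf_decomp[OF k2 vu] lcg_maximally_distant_leaf[OF vv vu assms(4)] by metis
  obtain r b where v: "v = r @ [b]" "r \<in> lcg_leaf_cycles n k" "1 \<le> b" "b < n"
    using lcg_leaf_decomp[OF k2 vv] lcg_maximally_distant_leaf[OF vu vv assms(3)] by metis
  have a: "(n + 1) div 2 \<le> a" "a = (n + 1) div 2 \<longrightarrow> q = 0 # replicate (k - 2) 1"
    using outside u unfolding lcg_strong_basis_def by force+
  have b: "(n + 1) div 2 \<le> b" "b = (n + 1) div 2 \<longrightarrow> r = 0 # replicate (k - 2) 1"
    using outside v unfolding lcg_strong_basis_def by force+
  show False
  proof (cases "q = r")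
    case True
    have far: "n \<le> 2 * cyc_dist n a b + 1"
      using lcg_maximally_distant_same_cycle_iff[OF u(2,4) v(3,4)] assms(3) u v True by simp
    have half: "n \<le> 2 * ((n + 1) div 2)" by simp
    show False
    proof (cases "a \<le> b")
      case True
      then have "cyc_dist n a b \<le> b - a" using cyc_dist_shift[of a "b - a" n] v(4) by simp
      then show False using far half a(1) v(4) True by linarith
    next
      case False
      then have "cyc_dist n a b \<le> a - b"
        using cyc_dist_shift[of b "a - b" n] u(4) cyc_dist_sym[of n a b] by simp
      then show False using far half b(1) u(4) False by linarith
    qed
  next
    case False
    have "n \<le> 2 * cyc_dist n 0 b + 1" "n \<le> 2 * cyc_dist n 0 a + 1"
      using lcg_maximally_distant_other_cycle_iff[OF u(2) v(2) False u(4) v(3,4)]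
        lcg_maximally_distant_other_cycle_iff[OF v(2) u(2) _ v(4) u(3,4)] assms(3,4) u v False
      by auto
    then have "a \<le> (n + 1) div 2" "b \<le> (n + 1) div 2"
      using cyc_dist_shift[of 0 a n] cyc_dist_shift[of 0 b n] u(4) v(4) by auto
    then show False using a b False by simp
  qed
qed

lemma strong_resolving_set_lcg_strong_basis:
  "strong_resolving_set (lcg_V n k) (lcg_adj n k) (lcg_strong_basis n k)"
  using lcg.strong_resolving_setI_maximally_distant[OF finite_lcg_V lcg_strong_basis_subset]
    lcg_strong_basis_hits_maximally_distant by blast

lemma strong_resolving_set_antipodal_leaves:
  assumes "strong_resolving_set (lcg_V n k) (lcg_adj n k) R" "q \<in> lcg_leaf_cycles n k"
    and "1 \<le> a" "a < n" "1 \<le> b" "b < n" "a \<noteq> b" "n \<le> 2 * cyc_dist n a b + 1"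
  shows "q @ [a] \<in> R \<or> q @ [b] \<in> R"
proof (rule lcg.strong_resolving_set_hits_maximally_distant[OF assms(1)])
  show "q @ [a] \<in> lcg_V n k" "q @ [b] \<in> lcg_V n k"
    using lcg_leaf_cycle_vert[OF k2 assms(2)] assms(4,6) unfolding lcg_V_def by auto
  show "lcg.maximally_distant (q @ [a]) (q @ [b])" "lcg.maximally_distant (q @ [b]) (q @ [a])"
    using lcg_maximally_distant_same_cycle_iff[OF assms(2)] assms(3-8) cyc_dist_sym[of n a b]
    by auto
qed (use assms(7) in simp)

lemma strong_resolving_set_leaf_cycle_card_ge:
  assumes "strong_resolving_set (lcg_V n k) (lcg_adj n k) R" "finite R" "q \<in> lcg_leaf_cycles n k"
  shows "(n + 1) div 2 - 1 \<le> card (R \<inter> (\<lambda>j. q @ [j]) ` {1..<n})"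
proof -
  have "card {1..<(n + 1) div 2} \<le> card (R \<inter> (\<lambda>j. q @ [j]) ` {1..<n})"
  proof (rule card_le_card_if_hits_pairs[where f = "\<lambda>j. q @ [j]" and g = "\<lambda>j. q @ [j + n div 2]"])
    fix j assume j: "j \<in> {1..<(n + 1) div 2}"
    have "cyc_dist n j (j + n div 2) = n div 2" using cyc_dist_shift[of j "n div 2" n] j by auto
    then show "q @ [j] \<in> R \<inter> (\<lambda>j. q @ [j]) ` {1..<n} \<or>
        q @ [j + n div 2] \<in> R \<inter> (\<lambda>j. q @ [j]) ` {1..<n}"
      using strong_resolving_set_antipodal_leaves[OF assms(1,3), of j "j + n div 2"] j by auto
  qed (use assms(2) in \<open>auto simp: inj_on_def\<close>)
  then show ?thesis by simp
qed

lemma strong_resolving_set_leaf_cycle_card_ge_if_head_antipodes: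
  assumes "strong_resolving_set (lcg_V n k) (lcg_adj n k) R" "finite R" "q \<in> lcg_leaf_cycles n k"
    and "q @ [n div 2] \<in> R" "q @ [(n + 1) div 2] \<in> R"
  shows "(n + 1) div 2 \<le> card (R \<inter> (\<lambda>j. q @ [j]) ` {1..<n})"
proof -
  define g where "g j = (if j < n div 2 then q @ [j + (n + 1) div 2] else q @ [j])" for j
  have "card {1..(n + 1) div 2} \<le> card (R \<inter> (\<lambda>j. q @ [j]) ` {1..<n})"
  proof (rule card_le_card_if_hits_pairs[where f = "\<lambda>j. q @ [j]" and g = g])
    fix j assume j: "j \<in> {1..(n + 1) div 2}"
    show "q @ [j] \<in> R \<inter> (\<lambda>j. q @ [j]) ` {1..<n} \<or> g j \<in> R \<inter> (\<lambda>j. q @ [j]) ` {1..<n}"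
    proof (cases "j < n div 2")
      case True
      have "cyc_dist n j (j + (n + 1) div 2) = n div 2"
        using cyc_dist_shift[of j "(n + 1) div 2" n] True by auto
      then show ?thesis
        using strong_resolving_set_antipodal_leaves[OF assms(1,3), of j "j + (n + 1) div 2"] j True
        unfolding g_def by auto
    next
      case False
      then have "j = n div 2 \<or> j = (n + 1) div 2" using j by auto
      then show ?thesis using assms(4,5) j n3 by auto
    qed
  qed (use assms(2) in \<open>auto simp: inj_on_def g_def split: if_splits\<close>)
  then show ?thesis by simp
qed

lemma strong_resolving_set_deficient_leaf_cycles:
  assumes "strong_resolving_set (lcg_V n k) (lcg_adj n k) R"
  shows "card {q \<in> lcg_leaf_cycles n k. q @ [n div 2] \<notin> R \<or> q @ [(n + 1) div 2] \<notin> R} \<le> 1"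
proof -
  have far: "n \<le> 2 * cyc_dist n 0 a + 1 \<and> 1 \<le> a \<and> a < n" if "a = n div 2 \<or> a = (n + 1) div 2" for a
    using that cyc_dist_shift[of 0 a n] n3 by auto
  have "q = r" if "q \<in> lcg_leaf_cycles n k" "q @ [a] \<notin> R" "a = n div 2 \<or> a = (n + 1) div 2"
    and "r \<in> lcg_leaf_cycles n k" "r @ [b] \<notin> R" "b = n div 2 \<or> b = (n + 1) div 2" for q r a b
  proof (rule ccontr)
    assume "q \<noteq> r"
    have "q @ [a] \<in> R \<or> r @ [b] \<in> R"
    proof (rule lcg.strong_resolving_set_hits_maximally_distant[OF assms])
      show "q @ [a] \<in> lcg_V n k" "r @ [b] \<in> lcg_V n k"
        using lcg_leaf_cycle_vert[OF k2] that far unfolding lcg_V_def by auto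
      show "lcg.maximally_distant (q @ [a]) (r @ [b])" "lcg.maximally_distant (r @ [b]) (q @ [a])"
        using lcg_maximally_distant_other_cycle_iff that far \<open>q \<noteq> r\<close> by auto
    qed (use \<open>q \<noteq> r\<close> in simp)
    then show False using that by blast
  qed
  then show ?thesis by (auto simp: card_le_Suc0_iff_eq finite_lcg_leaf_cycles)
qed

lemma strong_resolving_set_card_ge:
  assumes "strong_resolving_set (lcg_V n k) (lcg_adj n k) R"
  shows "(n + 1) div 2 * card (lcg_leaf_cycles n k) \<le> card R + 1"
proof -
  let ?Q = "lcg_leaf_cycles n k"
  let ?B = "\<lambda>q. R \<inter> (\<lambda>j. q @ [j]) ` {1..<n}"
  define D where "D = {q \<in> ?Q. q @ [n div 2] \<notin> R \<or> q @ [(n + 1) div 2] \<notin> R}"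
  have "finite R" using assms finite_lcg_V finite_subset unfolding strong_resolving_set_def by blast
  have per_cycle: "(n + 1) div 2 \<le> card (?B q) + (if q \<in> D then 1 else 0)" if "q \<in> ?Q" for q
    using strong_resolving_set_leaf_cycle_card_ge[OF assms \<open>finite R\<close> that]
      strong_resolving_set_leaf_cycle_card_ge_if_head_antipodes[OF assms \<open>finite R\<close> that] that
    unfolding D_def by auto
  have "(\<Sum>q\<in>?Q. card (?B q)) = card (\<Union>q\<in>?Q. ?B q)"
    using \<open>finite R\<close> by (intro card_UN_disjoint[symmetric]) (auto simp: finite_lcg_leaf_cycles)
  also have "\<dots> \<le> card R" using \<open>finite R\<close> by (intro card_mono) auto
  finally have "(\<Sum>q\<in>?Q. card (?B q)) \<le> card R" .
  moreover have "(\<Sum>q\<in>?Q. if q \<in> D then 1 else 0) = card D"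
    unfolding D_def by (simp add: sum.If_cases finite_lcg_leaf_cycles Int_def conj_commute)
  moreover have "card D \<le> 1"
    unfolding D_def by (rule strong_resolving_set_deficient_leaf_cycles[OF assms])
  moreover have "(n + 1) div 2 * card ?Q \<le> (\<Sum>q\<in>?Q. card (?B q) + (if q \<in> D then 1 else 0))"
    using sum_mono[OF per_cycle] by (simp add: mult.commute)
  ultimately show ?thesis by (simp add: sum.distrib)
qed

end

theorem theorem5:
  fixes n k :: nat
  assumes "n \<ge> 3" and "k \<ge> 2"
  shows "sdim (lcg_V n k) (lcg_adj n k) = ((n + 1) div 2) * n * (n - 1) ^ (k - 2) - 1"
proof -
  have "sdim (lcg_V n k) (lcg_adj n k) = card (lcg_strong_basis n k)"
  proof (rule sdim_eqI[OF finite_lcg_V strong_resolving_set_lcg_strong_basis[OF assms]])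
    fix R assume "strong_resolving_set (lcg_V n k) (lcg_adj n k) R"
    then show "card (lcg_strong_basis n k) \<le> card R"
      using strong_resolving_set_card_ge[OF assms] card_lcg_strong_basis[OF assms] by fastforce
  qed
  then show ?thesis
    using card_lcg_strong_basis[OF assms] card_lcg_leaf_cycles by (simp add: mult.assoc)
qed

end
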